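(* Let $m\ge 2$ be an integer and let $\sigma_0=\pm1$ if $m$ is odd and $\sigma_0=(-1)^{m/2}$ if $m$ is even. For a real $(m-1)\times(m-1)$ signed permutation matrix $P$ and $\tau>0$, consider the linear system $$D\,\partial_t q + A\,\partial_x q = B q,\qquad q(x,t)=(q_0,\dots,q_{m-1})^T\in\mathbb{C}^m,$$ with $$A=\begin{bmatrix} 0_{1\times(m-1)} & \sigma_0\\ P & 0_{(m-1)\times 1}\end{bmatrix},\quad B=\begin{bmatrix} 0 & 0_{1\times(m-1)}\\ 0_{(m-1)\times 1} & P\end{bmatrix},\quad D=\operatorname{diag}(1,\tau,\dots,\tau).$$ Call this system stable if for every $\tau>0$, every real wavenumber $k$, and every $\omega\in\mathbb{C}$ with $\det(-i\omega D + ikA - B)=0$, one has $\operatorname{Im}\omega\le 0$. Then the system is stable if and only if $P=P^*$, where $P^*=(p^*_{ij})_{i,j=1}^{m-1}$ is defined by $$p^*_{ij}=\begin{cases}0 & i+j\ne m,\\ \sigma_0(-1)^{j-1} & i+j=m,\ j\le m/2,\\ \sigma_0(-1)^{m-j} & i+j=m,\ j> m/2.\end{cases}$$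
   Context: A real signed permutation matrix is a square matrix with all entries in $\{-1,0,+1\}$ having exactly one nonzero entry in each row and in each column. The system is a first-order relaxation of the linear PDE $\partial_t u+\sigma_0\partial_x^m u=0$, with $q_j$ intended to approximate $\partial_x^j u$; written componentwise it reads $\partial_t q_0+\sigma_0\partial_x q_{m-1}=0$ and, for $i=1,\dots,m-1$, $\tau\partial_t q_i+\sum_{j=1}^{m-1}p_{ij}\partial_x q_{j-1}=\sum_{j=1}^{m-1}p_{ij}q_j$. The dispersion relation is obtained from the ansatz $q(x,t)=\hat q\,e^{i(kx-\omega t)}$. *)

theory Defs
  imports "Jordan_Normal_Form.Determinant"
begin

text \<open>Matrices are Jordan_Normal_Form matrices with 0-based indices.
  The paper's 1-based index i corresponds to the 0-based index i - 1.\<close>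

definition signed_perm_mat :: "nat \<Rightarrow> real mat \<Rightarrow> bool" where
  "signed_perm_mat n P \<longleftrightarrow>
     P \<in> carrier_mat n n \<and>
     (\<forall>i<n. \<forall>j<n. P $$ (i, j) \<in> {-1, 0, 1}) \<and>
     (\<forall>i<n. \<exists>!j. j < n \<and> P $$ (i, j) \<noteq> 0) \<and>
     (\<forall>j<n. \<exists>!i. i < n \<and> P $$ (i, j) \<noteq> 0)"

text \<open>Entry p*_{ij} of the paper, with 1-based indices i, j.\<close>
definition pstar_entry :: "nat \<Rightarrow> real \<Rightarrow> nat \<Rightarrow> nat \<Rightarrow> real" where
  "pstar_entry m \<sigma>0 i j =
     (if i + j \<noteq> m then 0
      else if 2 * j \<le> m then \<sigma>0 * (-1) ^ (j - 1)
      else \<sigma>0 * (-1) ^ (m - j))"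

definition Pstar :: "nat \<Rightarrow> real \<Rightarrow> real mat" where
  "Pstar m \<sigma>0 = mat (m - 1) (m - 1) (\<lambda>(i, j). pstar_entry m \<sigma>0 (i + 1) (j + 1))"

text \<open>A = [[0, sigma0]; [P, 0]] (size m x m).\<close>
definition sysA :: "nat \<Rightarrow> real \<Rightarrow> real mat \<Rightarrow> real mat" where
  "sysA m \<sigma>0 P = mat m m (\<lambda>(i, j).
     if i = 0 then (if j = m - 1 then \<sigma>0 else 0)
     else (if j = m - 1 then 0 else P $$ (i - 1, j)))"

definition sysB :: "nat \<Rightarrow> real mat \<Rightarrow> real mat" where
  "sysB m P = mat m m (\<lambda>(i, j).
     if i = 0 \<or> j = 0 then 0 else P $$ (i - 1, j - 1))"

definition sysD :: "nat \<Rightarrow> real \<Rightarrow> real mat" where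
  "sysD m \<tau> = mat m m (\<lambda>(i, j). if i \<noteq> j then 0 else if i = 0 then 1 else \<tau>)"

definition dispersion_mat :: "nat \<Rightarrow> real \<Rightarrow> real mat \<Rightarrow> real \<Rightarrow> real \<Rightarrow> complex \<Rightarrow> complex mat" where
  "dispersion_mat m \<sigma>0 P \<tau> k \<omega> =
     (- \<i> * \<omega>) \<cdot>\<^sub>m map_mat complex_of_real (sysD m \<tau>)
     + (\<i> * complex_of_real k) \<cdot>\<^sub>m map_mat complex_of_real (sysA m \<sigma>0 P)
     - map_mat complex_of_real (sysB m P)"

definition stable_system :: "nat \<Rightarrow> real \<Rightarrow> real mat \<Rightarrow> bool" where
  "stable_system m \<sigma>0 P \<longleftrightarrow>
     (\<forall>\<tau>::real. \<tau> > 0 \<longrightarrow> (\<forall>k::real. \<forall>\<omega>::complex.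
        det (dispersion_mat m \<sigma>0 P \<tau> k \<omega>) = 0 \<longrightarrow> Im \<omega> \<le> 0))"

end

theory Submission
  imports Defs "HOL-Combinatorics.Cycles" "Jordan_Normal_Form.Char_Poly"
begin

text \<open>For \<open>\<tau> = 1\<close> the dispersion relation says that \<open>-i\<omega>\<close> is an eigenvalue of \<open>B - i k A\<close>, so
  stability puts the spectra of all these matrices into the closed left half plane. For \<open>k = 0\<close>
  this constrains the spectrum of \<open>P\<close>; letting \<open>k \<rightarrow> \<infinity>\<close> it forces the spectrum of \<open>A\<close> to be real.
  Both \<open>P\<close> and \<open>A\<close> are signed permutation matrices, and along a cycle of length \<open>L\<close> whose signs
  multiply to \<open>c\<close> every \<open>L\<close>-th root of \<open>c\<close> is an eigenvalue. Hence all cycles of \<open>P\<close> and \<open>A\<close> are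
  fixed points or transpositions, with sign product \<open>-1\<close> for \<open>P\<close> and \<open>+1\<close> for \<open>A\<close>. The permutation
  of \<open>A\<close> is that of \<open>P\<close> composed with the rotation \<open>i \<mapsto> i - 1\<close> of \<open>{0..m-1}\<close>; two involutions
  differing by a rotation force \<open>P\<close> to be anti-diagonal, and the sign conditions determine its
  entries recursively from \<open>\<sigma>\<^sub>0\<close>, which gives \<open>P = P*\<close>.

  Conversely, for \<open>P = P*\<close> the matrix \<open>A\<close> is symmetric and \<open>B + B\<^sup>T\<close> is diagonal with nonpositive
  entries, so pairing \<open>(-i\<omega>D + ikA - B)v = 0\<close> with \<open>v\<close> gives \<open>Im \<omega> \<cdot> v\<^sup>*Dv = Re (v\<^sup>*Bv) \<le> 0\<close>.\<close>

section \<open>Monomial matrices\<close>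

definition monomial_mat :: "nat \<Rightarrow> (nat \<Rightarrow> nat) \<Rightarrow> (nat \<Rightarrow> 'a::zero) \<Rightarrow> 'a mat" where
  "monomial_mat n p w = mat n n (\<lambda>(r, c). if c = p r then w r else 0)"

lemma monomial_mat_carrier [simp]: "monomial_mat n p w \<in> carrier_mat n n"
  and dim_row_monomial_mat [simp]: "dim_row (monomial_mat n p w) = n"
  and dim_col_monomial_mat [simp]: "dim_col (monomial_mat n p w) = n"
  and index_monomial_mat [simp]:
    "r < n \<Longrightarrow> c < n \<Longrightarrow> monomial_mat n p w $$ (r, c) = (if c = p r then w r else 0)"
  by (simp_all add: monomial_mat_def)

lemma monomial_mat_cong:
  assumes "\<And>r. r < n \<Longrightarrow> p r = q r" and "\<And>r. r < n \<Longrightarrow> w r = v r"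
  shows "monomial_mat n p w = monomial_mat n q v"
  by (rule eq_matI) (use assms in auto)

lemma map_monomial_mat: "f 0 = 0 \<Longrightarrow> map_mat f (monomial_mat n p w) = monomial_mat n p (f \<circ> w)"
  by (rule eq_matI) auto

lemma monomial_mat_symmetric:
  assumes "\<And>i. i < n \<Longrightarrow> p (p i) = i" and "\<And>i. i < n \<Longrightarrow> w (p i) = w i"
    and "\<And>i. i < n \<Longrightarrow> p i < n" and "i < n" and "j < n"
  shows "monomial_mat n p w $$ (i, j) = monomial_mat n p w $$ (j, i)"
proof (cases "j = p i")
  case True
  then show ?thesis using assms by simp
next
  case False
  then have "i \<noteq> p j" using assms(1)[OF \<open>j < n\<close>] by auto
  then show ?thesis using False assms(4,5) by simp
qed

lemma monomial_mat_mult_vec: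
  fixes w :: "nat \<Rightarrow> 'a::semiring_0"
  assumes "p permutes {..<n}" and "v \<in> carrier_vec n" and "r < n"
  shows "(monomial_mat n p w *\<^sub>v v) $ r = w r * v $ p r"
proof -
  have "p r < n" using assms(1,3) by (metis lessThan_iff permutes_in_image)
  have "(monomial_mat n p w *\<^sub>v v) $ r = (\<Sum>c = 0..<n. monomial_mat n p w $$ (r, c) * v $ c)"
    using assms(2,3) by (simp add: scalar_prod_def)
  also have "\<dots> = (\<Sum>c = 0..<n. if c = p r then w r * v $ c else 0)"
    using assms(3) by (intro sum.cong) auto
  also have "\<dots> = w r * v $ p r"
    using \<open>p r < n\<close> by simp
  finally show ?thesis .
qed

lemma signed_perm_mat_monomial:
  assumes "signed_perm_mat n P"
  obtains p w where "p permutes {..<n}" and "\<forall>r<n. w r = 1 \<or> w r = -1"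
    and "P = monomial_mat n p w"
proof -
  have P: "P \<in> carrier_mat n n"
    and entries: "\<forall>i<n. \<forall>j<n. P $$ (i, j) \<in> {-1, 0, 1}"
    and row: "\<forall>i<n. \<exists>!j. j < n \<and> P $$ (i, j) \<noteq> 0"
    and col: "\<forall>j<n. \<exists>!i. i < n \<and> P $$ (i, j) \<noteq> 0"
    using assms unfolding signed_perm_mat_def by simp_all
  define p where "p r = (if r < n then THE j. j < n \<and> P $$ (r, j) \<noteq> 0 else r)" for r
  have p: "p r < n" "P $$ (r, p r) \<noteq> 0" if "r < n" for r
    using theI'[OF row[rule_format, OF that]] that by (simp_all add: p_def)
  have p_unique: "p r = j" if "r < n" "j < n" "P $$ (r, j) \<noteq> 0" for r j
    using the1_equality[OF row[rule_format, OF that(1)]] that by (simp add: p_def)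
  have "inj_on p {..<n}"
  proof (rule inj_onI)
    fix r s assume rs: "r \<in> {..<n}" "s \<in> {..<n}" "p r = p s"
    then have "p r < n" using p by simp
    from col[rule_format, OF this] show "r = s" using p rs by (metis lessThan_iff)
  qed
  moreover have "p ` {..<n} \<subseteq> {..<n}" using p by auto
  ultimately have "bij_betw p {..<n} {..<n}"
    by (simp add: bij_betw_def endo_inj_surj)
  then have "p permutes {..<n}"
    by (rule bij_imp_permutes) (simp add: p_def)
  moreover have "\<forall>r<n. P $$ (r, p r) = 1 \<or> P $$ (r, p r) = -1"
  proof (intro allI impI)
    fix r assume r: "r < n"
    have "P $$ (r, p r) \<in> {-1, 0, 1}" using entries r p(1)[OF r] by blast
    moreover have "P $$ (r, p r) \<noteq> 0" using p(2)[OF r] .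
    ultimately show "P $$ (r, p r) = 1 \<or> P $$ (r, p r) = -1" by auto
  qed
  moreover have "P = monomial_mat n p (\<lambda>r. P $$ (r, p r))"
  proof (rule eq_matI)
    fix r c assume "r < dim_row (monomial_mat n p (\<lambda>r. P $$ (r, p r)))"
      "c < dim_col (monomial_mat n p (\<lambda>r. P $$ (r, p r)))"
    then show "P $$ (r, c) = monomial_mat n p (\<lambda>r. P $$ (r, p r)) $$ (r, c)"
      using p_unique[of r c] by (cases "c = p r") auto
  qed (use P in auto)
  ultimately show ?thesis by (rule that[of p "\<lambda>r. P $$ (r, p r)"])
qed

lemma permutes_least_power:
  fixes p :: "nat \<Rightarrow> nat"
  assumes "p permutes {..<n}"
  shows "0 < least_power p i" and "(p ^^ least_power p i) i = i"
    and "inj_on (\<lambda>t. (p ^^ t) i) {..<least_power p i}"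
proof -
  have "permutation p" using assms by (metis finite_lessThan permutation_permutes)
  then show L: "0 < least_power p i" "(p ^^ least_power p i) i = i"
    by (simp_all add: least_power_of_permutation)
  have "(p ^^ t) i \<noteq> i" if "0 < t" "t < least_power p i" for t
    using least_power_le[where f = p and n = t and x = i] that by fastforce
  then show "inj_on (\<lambda>t. (p ^^ t) i) {..<least_power p i}"
    using inj_on_funpow_least[OF L(2)] by (simp add: lessThan_atLeast0)
qed

lemma funpow_preimage_in_orbit:
  assumes "inj p" and "(p ^^ L) i = i" and "0 < L" and "p j = (p ^^ s) i"
  shows "j \<in> (\<lambda>t. (p ^^ t) i) ` {..<L}"
proof -
  have "p j = (p ^^ (s + L)) i" using assms(2,4) by (simp add: funpow_add)
  also have "\<dots> = p ((p ^^ (s + L - 1)) i)"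
    using assms(3) by (metis Suc_diff_1 add_gr_0 comp_apply funpow.simps(2))
  finally have "j = (p ^^ (s + L - 1)) i" using assms(1) by (simp add: inj_eq)
  also have "\<dots> = (p ^^ ((s + L - 1) mod L)) i" by (simp add: funpow_mod_eq assms(2))
  finally show ?thesis using assms(3) by simp
qed

text \<open>The eigenvector is supported on the orbit of \<open>i\<close>; its entry at \<open>(p ^^ t) i\<close> is \<open>z\<^sup>t\<close> divided
  by the product of the first \<open>t\<close> weights along the orbit.\<close>
lemma monomial_eigenfunction:
  fixes w :: "nat \<Rightarrow> 'a::field"
  assumes p: "p permutes {..<n}" and w: "\<forall>r<n. w r \<noteq> 0" and i: "i < n"
    and z: "z ^ least_power p i = (\<Prod>t<least_power p i. w ((p ^^ t) i))"
  shows "\<exists>x. x i = 1 \<and> (\<forall>j<n. w j * x (p j) = z * x j)"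
proof -
  define L where "L = least_power p i"
  define c where "c t = (\<Prod>u<t. w ((p ^^ u) i))" for t
  have L: "L > 0" "(p ^^ L) i = i" and inj: "inj_on (\<lambda>t. (p ^^ t) i) {..<L}"
    using permutes_least_power[OF p, of i] by (simp_all add: L_def)
  have c_nonzero: "c t \<noteq> 0" for t
    using w i permutes_in_image[OF permutes_funpow[OF p]] by (simp add: c_def)
  define orb where "orb = (\<lambda>t. (p ^^ t) i) ` {..<L}"
  define idx where "idx = the_inv_into {..<L} (\<lambda>t. (p ^^ t) i)"
  define x where "x j = (if j \<in> orb then z ^ idx j / c (idx j) else 0)" for j
  have x_orbit: "x ((p ^^ t) i) = z ^ t / c t" if "t < L" for t
    using that by (simp add: x_def orb_def idx_def the_inv_into_f_f[OF inj])
  have x_start: "x i = 1" using x_orbit[of 0] L by (simp add: c_def)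
  have "w j * x (p j) = z * x j" if j: "j < n" for j
  proof (cases "j \<in> orb")
    case True
    then obtain t where t: "t < L" "j = (p ^^ t) i" by (auto simp: orb_def)
    have c_Suc: "c (Suc t) = c t * w j" using t by (simp add: c_def)
    have "w j \<noteq> 0" using w j by simp
    show ?thesis
    proof (cases "Suc t < L")
      case True
      have "w j * x (p j) = w j * (z ^ Suc t / (c t * w j))"
        using x_orbit[OF True] t c_Suc by simp
      also have "\<dots> = z * (z ^ t / c t)" using \<open>w j \<noteq> 0\<close> by simp
      finally show ?thesis using x_orbit[OF t(1)] t by simp
    next
      case False
      then have "Suc t = L" using t by simp
      then have "p j = i" using L(2) t by (metis comp_apply funpow.simps(2))
      have "z ^ Suc t = c t * w j"
        using z \<open>Suc t = L\<close> c_Suc unfolding L_def c_def by simp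
      then have "w j * x (p j) = z ^ Suc t / c t"
        using \<open>p j = i\<close> x_start c_nonzero by simp
      then show ?thesis using x_orbit[OF t(1)] t by simp
    qed
  next
    case False
    have "p j \<notin> orb"
    proof
      assume "p j \<in> orb"
      then obtain s where "p j = (p ^^ s) i" by (auto simp: orb_def)
      from funpow_preimage_in_orbit[OF permutes_inj[OF p] L(2,1) this] False
      show False by (simp add: orb_def)
    qed
    with False show ?thesis by (simp add: x_def)
  qed
  with x_start show ?thesis by blast
qed

lemma eigenvalue_monomial_mat:
  fixes w :: "nat \<Rightarrow> 'a::field"
  assumes p: "p permutes {..<n}" and w: "\<forall>r<n. w r \<noteq> 0" and i: "i < n"
    and z: "z ^ least_power p i = (\<Prod>t<least_power p i. w ((p ^^ t) i))"
  shows "eigenvalue (monomial_mat n p w) z"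
proof -
  obtain x where x_start: "x i = 1" and eigen: "\<And>j. j < n \<Longrightarrow> w j * x (p j) = z * x j"
    using monomial_eigenfunction[OF assms] by blast
  have "(monomial_mat n p w *\<^sub>v vec n x) $ j = z * vec n x $ j" if "j < n" for j
    using monomial_mat_mult_vec[OF p _ that, of "vec n x"] eigen[OF that] that p
    by (metis index_vec lessThan_iff permutes_in_image vec_carrier)
  then have "monomial_mat n p w *\<^sub>v vec n x = z \<cdot>\<^sub>v vec n x"
    by (intro eq_vecI) simp_all
  moreover have "vec n x \<noteq> 0\<^sub>v n"
    using x_start i by (metis index_vec index_zero_vec(1) zero_neq_one)
  ultimately have "eigenvector (monomial_mat n p w) (vec n x) z"
    by (simp add: eigenvector_def)
  then show ?thesis by (auto simp: eigenvalue_def)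
qed

lemma prod_sign:
  fixes f :: "'b \<Rightarrow> 'a::comm_ring_1"
  assumes "\<forall>x\<in>A. f x = 1 \<or> f x = -1"
  shows "prod f A = 1 \<or> prod f A = -1"
  using assms by (induction A rule: infinite_finite_induct) auto

lemma cis_root: "L > 0 \<Longrightarrow> cis (\<theta> / real L) ^ L = cis \<theta>"
  by (simp add: DeMoivre)

lemma exists_root_sign_Re_pos:
  assumes "L \<ge> 3" and "c = 1 \<or> c = -1"
  shows "\<exists>z. z ^ L = c \<and> Re z > 0"
proof (cases "c = 1")
  case False
  have "pi / real L \<le> pi / 3" using assms(1) by (intro divide_left_mono) auto
  moreover have "0 < pi / real L" using assms(1) by simp
  ultimately have "cos (pi / real L) > 0" using pi_gt_zero by (intro cos_gt_zero_pi) linarith+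
  moreover have "cis (pi / real L) ^ L = c"
    using False assms cis_root[of L pi] by simp
  ultimately show ?thesis by (intro exI[of _ "cis (pi / real L)"]) simp
qed (auto intro: exI[of _ 1])

lemma exists_root_sign_Im_nonzero:
  assumes "L \<ge> 3" and "c = 1 \<or> c = -1"
  shows "\<exists>z. z ^ L = c \<and> Im z \<noteq> 0"
proof -
  define \<theta> where "\<theta> = (if c = 1 then 2 * pi else pi)"
  have "\<theta> / real L \<le> 2 * pi / 3" using assms(1) by (intro frac_le) (auto simp: \<theta>_def)
  moreover have "0 < \<theta> / real L" using assms(1) by (simp add: \<theta>_def)
  ultimately have "sin (\<theta> / real L) > 0" using pi_gt_zero by (intro sin_gt_zero) linarith+
  moreover have "cis (\<theta> / real L) ^ L = c"
    using assms cis_root[of L \<theta>] by (auto simp: \<theta>_def)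
  ultimately show ?thesis by (intro exI[of _ "cis (\<theta> / real L)"]) simp
qed

lemma monomial_mat_involution:
  fixes w :: "nat \<Rightarrow> real"
  assumes p: "p permutes {..<n}" and w: "\<forall>r<n. w r = 1 \<or> w r = -1"
    and no_eigenvalue: "\<And>z. z \<in> G \<Longrightarrow> \<not> eigenvalue (map_mat complex_of_real (monomial_mat n p w)) z"
    and roots: "\<And>L c. L \<ge> 3 \<Longrightarrow> c = 1 \<or> c = -1 \<Longrightarrow> \<exists>z\<in>G. z ^ L = c"
    and i: "i < n"
  shows "p (p i) = i"
proof -
  let ?L = "least_power p i"
  have "\<not> ?L \<ge> 3"
  proof
    assume "?L \<ge> 3"
    have "(p ^^ t) i < n" for t
      using i permutes_in_image[OF permutes_funpow[OF p]] by simp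
    then have "complex_of_real (w ((p ^^ t) i)) = 1 \<or> complex_of_real (w ((p ^^ t) i)) = -1" for t
      using w by (metis of_real_1 of_real_minus)
    then have "(\<Prod>t<?L. complex_of_real (w ((p ^^ t) i))) = 1
        \<or> (\<Prod>t<?L. complex_of_real (w ((p ^^ t) i))) = -1"
      by (intro prod_sign) blast
    then obtain z where "z \<in> G" and z: "z ^ ?L = (\<Prod>t<?L. complex_of_real (w ((p ^^ t) i)))"
      using roots[OF \<open>?L \<ge> 3\<close>] by blast
    have "eigenvalue (monomial_mat n p (complex_of_real \<circ> w)) z"
      by (rule eigenvalue_monomial_mat[OF p _ i]) (use w z in auto)
    with no_eigenvalue[OF \<open>z \<in> G\<close>] show False by (simp add: map_monomial_mat)
  qed
  then have "?L = 1 \<or> ?L = 2" using permutes_least_power(1)[OF p, of i] by linarith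
  then show ?thesis
    using permutes_least_power(2)[OF p, of i] by (auto simp: numeral_2_eq_2)
qed

lemma monomial_mat_transposition_weight:
  fixes w :: "nat \<Rightarrow> real"
  assumes p: "p permutes {..<n}" and w: "\<forall>r<n. w r = 1 \<or> w r = -1"
    and no_eigenvalue: "\<not> eigenvalue (map_mat complex_of_real (monomial_mat n p w)) z"
    and z: "z ^ 2 = complex_of_real c" and c: "c = 1 \<or> c = -1"
    and i: "i < n" and "p i \<noteq> i" and "p (p i) = i"
  shows "w i * w (p i) = - c"
proof -
  have perm: "permutation p" using p by (metis finite_lessThan permutation_permutes)
  have L: "least_power p i = 2"
    using least_power_le[where f = p and n = 2 and x = i] least_power_gt_one[OF perm \<open>p i \<noteq> i\<close>]
      \<open>p (p i) = i\<close> by (simp add: numeral_2_eq_2)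
  have "w i * w (p i) \<noteq> c"
  proof
    assume "w i * w (p i) = c"
    then have "eigenvalue (monomial_mat n p (complex_of_real \<circ> w)) z"
      using z L w by (intro eigenvalue_monomial_mat[OF p _ i]) (auto simp: numeral_2_eq_2)
    with no_eigenvalue show False by (simp add: map_monomial_mat)
  qed
  moreover have "p i < n" using p i by (metis lessThan_iff permutes_in_image)
  then have "w i = 1 \<or> w i = -1" "w (p i) = 1 \<or> w (p i) = -1" using w i by simp_all
  ultimately show ?thesis using c by auto
qed

section \<open>Spectra of the pencil B - ik A\<close>

lemma poly_linear_factors_lower_bound:
  fixes as :: "complex list"
  assumes "\<forall>a\<in>set as. Re a \<le> 0" and s: "Re s > 0"
  shows "Re s ^ length as \<le> cmod (poly (\<Prod>a\<leftarrow>as. [:-a, 1:]) s)"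
  using assms(1)
proof (induction as)
  case (Cons a as)
  have "Re s \<le> Re (s - a)" using Cons.prems by simp
  also have "\<dots> \<le> cmod (s - a)" by (rule complex_Re_le_cmod)
  finally have "Re s * Re s ^ length as \<le> cmod (s - a) * cmod (poly (\<Prod>a\<leftarrow>as. [:-a, 1:]) s)"
    using Cons s by (intro mult_mono) auto
  moreover have "poly (\<Prod>a'\<leftarrow>a # as. [:-a', 1:]) s = (s - a) * poly (\<Prod>a\<leftarrow>as. [:-a, 1:]) s"
    by (simp add: algebra_simps)
  ultimately show ?case by (simp add: norm_mult)
qed simp

lemma char_poly_lower_bound:
  fixes M :: "complex mat"
  assumes M: "M \<in> carrier_mat n n" and left: "\<And>z. eigenvalue M z \<Longrightarrow> Re z \<le> 0"
    and s: "Re s > 0"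
  shows "Re s ^ n \<le> cmod (poly (char_poly M) s)"
proof -
  obtain as where cp: "char_poly M = (\<Prod>a\<leftarrow>as. [:-a, 1:])" and "length as = n"
    using char_poly_factorized[OF M] by auto
  have "Re a \<le> 0" if "a \<in> set as" for a
    using that left by (simp add: eigenvalue_root_char_poly[OF M] cp poly_prod_list_zero_iff)
  then show ?thesis
    using poly_linear_factors_lower_bound[OF _ s] cp \<open>length as = n\<close> by auto
qed

lemma tendsto_det_add_smult:
  fixes X Y :: "'a::real_normed_field mat"
  assumes X: "X \<in> carrier_mat n n" and Y: "Y \<in> carrier_mat n n"
  shows "((\<lambda>e. det (X + e \<cdot>\<^sub>m Y)) \<longlongrightarrow> det X) (at 0)"
proof -
  have det_expand: "det (X + e \<cdot>\<^sub>m Y) = (\<Sum>p | p permutes {0..<n}.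
      signof p * (\<Prod>i = 0..<n. X $$ (i, p i) + e * Y $$ (i, p i)))" for e
  proof -
    have "det (X + e \<cdot>\<^sub>m Y) = (\<Sum>p | p permutes {0..<n}.
        signof p * (\<Prod>i = 0..<n. (X + e \<cdot>\<^sub>m Y) $$ (i, p i)))"
      using X Y by (intro det_def') auto
    also have "\<dots> = (\<Sum>p | p permutes {0..<n}.
        signof p * (\<Prod>i = 0..<n. X $$ (i, p i) + e * Y $$ (i, p i)))"
      by (intro sum.cong refl arg_cong[where f = "\<lambda>x. _ * x"] prod.cong)
        (use X Y in \<open>auto simp: permutes_in_image\<close>)
    finally show ?thesis .
  qed
  have "((\<lambda>e. \<Sum>p | p permutes {0..<n}.
      signof p * (\<Prod>i = 0..<n. X $$ (i, p i) + e * Y $$ (i, p i))) \<longlongrightarrow>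
    (\<Sum>p | p permutes {0..<n}. signof p * (\<Prod>i = 0..<n. X $$ (i, p i) + 0 * Y $$ (i, p i)))) (at 0)"
    by (intro tendsto_intros)
  then show ?thesis
    unfolding det_expand using det_def'[OF X] by simp
qed

lemma pencil_det_lower_bound:
  fixes A B :: "complex mat"
  assumes A: "A \<in> carrier_mat n n" and B: "B \<in> carrier_mat n n"
    and stable: "\<And>z. eigenvalue (B - (\<i> * of_real k) \<cdot>\<^sub>m A) z \<Longrightarrow> Re z \<le> 0"
    and k: "k * Im \<mu> > 0"
  shows "\<bar>Im \<mu>\<bar> ^ n \<le> cmod (det (char_matrix A \<mu> + (\<i> / of_real k) \<cdot>\<^sub>m B))"
proof -
  define M where "M = B - (\<i> * of_real k) \<cdot>\<^sub>m A"
  define X where "X = char_matrix A \<mu> + (\<i> / of_real k) \<cdot>\<^sub>m B"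
  define s where "s = - \<i> * of_real k * \<mu>"
  have M: "M \<in> carrier_mat n n" using A by (simp add: M_def minus_carrier_mat)
  have X: "X \<in> carrier_mat n n" using A B by (simp add: X_def)
  have "k \<noteq> 0" using k by auto
  have "- char_matrix M s = (\<i> * of_real k) \<cdot>\<^sub>m X"
  proof (rule eq_matI)
    fix r c assume "r < dim_row ((\<i> * of_real k) \<cdot>\<^sub>m X)" "c < dim_col ((\<i> * of_real k) \<cdot>\<^sub>m X)"
    then have rc: "r < n" "c < n" using X by auto
    have "(- char_matrix M s) $$ (r, c) = s * of_bool (r = c) + \<i> * of_real k * A $$ (r, c) - B $$ (r, c)"
      using rc A B by (simp add: M_def char_matrix_def)
    also have "\<dots> = \<i> * of_real k * (A $$ (r, c) - \<mu> * of_bool (r = c) + \<i> / of_real k * B $$ (r, c))"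
      using \<open>k \<noteq> 0\<close> by (simp add: s_def field_simps)
    also have "\<dots> = ((\<i> * of_real k) \<cdot>\<^sub>m X) $$ (r, c)"
      using rc A B by (simp add: X_def char_matrix_def)
    finally show "(- char_matrix M s) $$ (r, c) = \<dots>" .
  qed (use X char_matrix_closed[OF M, of s] in auto)
  then have "poly (char_poly M) s = (\<i> * of_real k) ^ n * det X"
    using char_poly_matrix[OF M] X by simp
  moreover have "(k * Im \<mu>) ^ n \<le> cmod (poly (char_poly M) s)"
    using char_poly_lower_bound[OF M stable[folded M_def], of s] k by (simp add: s_def)
  moreover have "(k * Im \<mu>) ^ n = \<bar>k\<bar> ^ n * \<bar>Im \<mu>\<bar> ^ n"
    using k by (metis abs_mult abs_of_pos power_mult_distrib)
  ultimately have "\<bar>k\<bar> ^ n * \<bar>Im \<mu>\<bar> ^ n \<le> \<bar>k\<bar> ^ n * cmod (det X)"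
    by (simp add: norm_mult norm_power)
  then show ?thesis using \<open>k \<noteq> 0\<close> by (simp add: X_def)
qed

text \<open>By the previous lemma \<open>det (A - \<mu> + (i/k) B)\<close> stays away from zero as \<open>k \<rightarrow> \<infinity>\<close> (with the
  sign of \<open>Im \<mu>\<close>), while it tends to \<open>det (A - \<mu>) = 0\<close>.\<close>
lemma eigenvalue_real_if_pencil_stable:
  fixes A B :: "complex mat"
  assumes A: "A \<in> carrier_mat n n" and B: "B \<in> carrier_mat n n"
    and stable: "\<And>k z. eigenvalue (B - (\<i> * of_real k) \<cdot>\<^sub>m A) z \<Longrightarrow> Re z \<le> 0"
    and \<mu>: "eigenvalue A \<mu>"
  shows "Im \<mu> = 0"
proof (rule ccontr)
  assume "Im \<mu> \<noteq> 0"
  define X where "X = char_matrix A \<mu>"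
  have X: "X \<in> carrier_mat n n" using A by (simp add: X_def)
  have "((\<lambda>e. det (X + e \<cdot>\<^sub>m B)) \<longlongrightarrow> 0) (at 0)"
    using tendsto_det_add_smult[OF X B] eigenvalue_det[OF A] \<mu> by (simp add: X_def)
  moreover have "\<bar>Im \<mu>\<bar> ^ n > 0" using \<open>Im \<mu> \<noteq> 0\<close> by simp
  ultimately have "\<forall>\<^sub>F e in at 0. dist (det (X + e \<cdot>\<^sub>m B)) 0 < \<bar>Im \<mu>\<bar> ^ n"
    by (rule tendstoD)
  then obtain d where d: "d > 0"
    and small: "\<And>e. e \<noteq> 0 \<Longrightarrow> dist e 0 < d \<Longrightarrow> cmod (det (X + e \<cdot>\<^sub>m B)) < \<bar>Im \<mu>\<bar> ^ n"
    unfolding eventually_at by (auto simp: dist_norm)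
  define k where "k = sgn (Im \<mu>) * (2 / d)"
  have "k * Im \<mu> > 0" using \<open>Im \<mu> \<noteq> 0\<close> d by (simp add: k_def sgn_if)
  moreover have "\<bar>k\<bar> = 2 / d" using \<open>Im \<mu> \<noteq> 0\<close> d by (simp add: k_def abs_mult)
  then have "cmod (\<i> / of_real k) = d / 2" by (simp add: norm_divide)
  ultimately have "cmod (det (X + (\<i> / of_real k) \<cdot>\<^sub>m B)) < \<bar>Im \<mu>\<bar> ^ n"
    using d by (intro small) (auto simp: dist_norm)
  with pencil_det_lower_bound[OF A B stable \<open>k * Im \<mu> > 0\<close>] show False by (simp add: X_def)
qed

section \<open>The energy estimate\<close>

definition quad_form :: "nat \<Rightarrow> (nat \<Rightarrow> nat \<Rightarrow> real) \<Rightarrow> (nat \<Rightarrow> complex) \<Rightarrow> complex" where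
  "quad_form m X v = (\<Sum>i<m. \<Sum>j<m. cnj (v i) * of_real (X i j) * v j)"

lemma cnj_quad_form: "cnj (quad_form m X v) = quad_form m (\<lambda>i j. X j i) v"
  unfolding quad_form_def by (simp, subst sum.swap, simp add: ac_simps)

lemma quad_form_add:
  "quad_form m (\<lambda>i j. X i j + Y i j) v = quad_form m X v + quad_form m Y v"
  by (simp add: quad_form_def distrib_left distrib_right sum.distrib)

lemma quad_form_cong:
  "(\<And>i j. i < m \<Longrightarrow> j < m \<Longrightarrow> X i j = Y i j) \<Longrightarrow> quad_form m X v = quad_form m Y v"
  by (simp add: quad_form_def)

lemma quad_form_diagonal:
  assumes "\<And>i j. i < m \<Longrightarrow> j < m \<Longrightarrow> i \<noteq> j \<Longrightarrow> X i j = 0"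
  shows "quad_form m X v = of_real (\<Sum>i<m. X i i * (cmod (v i))\<^sup>2)"
proof -
  have "quad_form m X v = (\<Sum>i<m. \<Sum>j<m. if j = i then cnj (v i) * of_real (X i i) * v i else 0)"
    unfolding quad_form_def using assms by (intro sum.cong refl) auto
  also have "\<dots> = (\<Sum>i<m. of_real (X i i * (cmod (v i))\<^sup>2))"
    by (intro sum.cong refl) (simp add: algebra_simps flip: complex_norm_square)
  finally show ?thesis by simp
qed

lemma Im_quad_form_symmetric:
  assumes "\<And>i j. i < m \<Longrightarrow> j < m \<Longrightarrow> X i j = X j i"
  shows "Im (quad_form m X v) = 0"
proof -
  have "cnj (quad_form m X v) = quad_form m X v"
    unfolding cnj_quad_form using assms by (intro quad_form_cong) auto
  from arg_cong[where f = Im, OF this] show ?thesis by simp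
qed

lemma Re_quad_form_skew:
  assumes "\<And>i j. i < m \<Longrightarrow> j < m \<Longrightarrow> i \<noteq> j \<Longrightarrow> X i j + X j i = 0"
  shows "Re (quad_form m X v) = (\<Sum>i<m. X i i * (cmod (v i))\<^sup>2)"
proof -
  have "quad_form m X v + cnj (quad_form m X v) = quad_form m (\<lambda>i j. X i j + X j i) v"
    unfolding cnj_quad_form quad_form_add ..
  also have "\<dots> = of_real (\<Sum>i<m. (X i i + X i i) * (cmod (v i))\<^sup>2)"
    using assms by (intro quad_form_diagonal)
  finally have "Re (quad_form m X v + cnj (quad_form m X v)) = (\<Sum>i<m. (X i i + X i i) * (cmod (v i))\<^sup>2)"
    by (simp only: Re_complex_of_real)
  then show ?thesis by (simp add: sum_distrib_left[symmetric] mult.assoc)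
qed

lemma quad_form_pencil_null_vector:
  fixes D A B :: "real mat" and v :: "complex vec"
  assumes "D \<in> carrier_mat m m" and "A \<in> carrier_mat m m" and "B \<in> carrier_mat m m"
    and "v \<in> carrier_vec m"
    and null: "((- \<i> * \<omega>) \<cdot>\<^sub>m map_mat of_real D + (\<i> * of_real k) \<cdot>\<^sub>m map_mat of_real A
      - map_mat of_real B) *\<^sub>v v = 0\<^sub>v m"
  shows "(- \<i> * \<omega>) * quad_form m (\<lambda>i j. D $$ (i, j)) (\<lambda>i. v $ i)
    + (\<i> * of_real k) * quad_form m (\<lambda>i j. A $$ (i, j)) (\<lambda>i. v $ i)
    - quad_form m (\<lambda>i j. B $$ (i, j)) (\<lambda>i. v $ i) = 0"
proof -
  have row_expand: "cnj (v $ i) * (\<Sum>j<m. ((- \<i> * \<omega>) * of_real (D $$ (i, j))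
        + (\<i> * of_real k) * of_real (A $$ (i, j)) - of_real (B $$ (i, j))) * v $ j)
      = (- \<i> * \<omega>) * (\<Sum>j<m. cnj (v $ i) * of_real (D $$ (i, j)) * v $ j)
        + (\<i> * of_real k) * (\<Sum>j<m. cnj (v $ i) * of_real (A $$ (i, j)) * v $ j)
        - (\<Sum>j<m. cnj (v $ i) * of_real (B $$ (i, j)) * v $ j)" for i
    by (simp add: sum_distrib_left sum.distrib sum_subtractf sum_negf algebra_simps)
  have "(\<Sum>j<m. ((- \<i> * \<omega>) * of_real (D $$ (i, j)) + (\<i> * of_real k) * of_real (A $$ (i, j))
      - of_real (B $$ (i, j))) * v $ j) = 0" if "i < m" for i
    using arg_cong[OF null, of "\<lambda>u. u $ i"] that assms(1-4)
    by (simp add: scalar_prod_def lessThan_atLeast0)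
  then have "(\<Sum>i<m. cnj (v $ i) * (\<Sum>j<m. ((- \<i> * \<omega>) * of_real (D $$ (i, j))
      + (\<i> * of_real k) * of_real (A $$ (i, j)) - of_real (B $$ (i, j))) * v $ j)) = 0"
    by simp
  then show ?thesis
    unfolding row_expand by (simp add: quad_form_def sum.distrib sum_subtractf sum_distrib_left)
qed

lemma dissipative_pencil_Im_nonpos:
  fixes D A B :: "real mat" and v :: "complex vec"
  assumes D: "D \<in> carrier_mat m m" and A: "A \<in> carrier_mat m m" and B: "B \<in> carrier_mat m m"
    and v: "v \<in> carrier_vec m" "v \<noteq> 0\<^sub>v m"
    and null: "((- \<i> * \<omega>) \<cdot>\<^sub>m map_mat of_real D + (\<i> * of_real k) \<cdot>\<^sub>m map_mat of_real A
      - map_mat of_real B) *\<^sub>v v = 0\<^sub>v m"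
    and D_diag: "\<And>i j. i < m \<Longrightarrow> j < m \<Longrightarrow> i \<noteq> j \<Longrightarrow> D $$ (i, j) = 0"
    and D_pos: "\<And>i. i < m \<Longrightarrow> D $$ (i, i) > 0"
    and A_sym: "\<And>i j. i < m \<Longrightarrow> j < m \<Longrightarrow> A $$ (i, j) = A $$ (j, i)"
    and B_skew: "\<And>i j. i < m \<Longrightarrow> j < m \<Longrightarrow> i \<noteq> j \<Longrightarrow> B $$ (i, j) + B $$ (j, i) = 0"
    and B_diag: "\<And>i. i < m \<Longrightarrow> B $$ (i, i) \<le> 0"
  shows "Im \<omega> \<le> 0"
proof -
  define q where "q X = quad_form m (\<lambda>i j. X $$ (i, j)) (\<lambda>i. v $ i)" for X :: "real mat"
  have energy: "(- \<i> * \<omega>) * q D + (\<i> * of_real k) * q A - q B = 0"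
    using quad_form_pencil_null_vector[OF D A B v(1) null] by (simp add: q_def)
  define R where "R = (\<Sum>i<m. D $$ (i, i) * (cmod (v $ i))\<^sup>2)"
  have qD: "q D = of_real R"
    unfolding q_def R_def by (rule quad_form_diagonal) (rule D_diag)
  have "\<exists>i<m. v $ i \<noteq> 0"
  proof (rule ccontr)
    assume "\<not> (\<exists>i<m. v $ i \<noteq> 0)"
    then have "v = 0\<^sub>v m" using v(1) by (intro eq_vecI) auto
    with v(2) show False ..
  qed
  then obtain i where "i < m" "v $ i \<noteq> 0" by blast
  then have "R > 0"
    unfolding R_def using D_pos
    by (intro sum_pos2[of _ i]) (auto intro!: mult_nonneg_nonneg less_imp_le[OF D_pos])
  have "Im (q A) = 0"
    unfolding q_def using A_sym by (rule Im_quad_form_symmetric)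
  have "Re (q B) = (\<Sum>i<m. B $$ (i, i) * (cmod (v $ i))\<^sup>2)"
    unfolding q_def using B_skew by (rule Re_quad_form_skew)
  also have "\<dots> \<le> 0"
    using B_diag by (intro sum_nonpos) (simp add: mult_nonpos_nonneg)
  finally have "Re (q B) \<le> 0" .
  have "Im \<omega> * R = Re (q B)"
    using arg_cong[OF energy, of Re] qD \<open>Im (q A) = 0\<close> by simp
  with \<open>Re (q B) \<le> 0\<close> \<open>R > 0\<close> show ?thesis
    by (smt (verit) mult_pos_pos)
qed

section \<open>The relaxation system\<close>

lemma sysA_carrier [simp]: "sysA m \<sigma>0 P \<in> carrier_mat m m"
  and sysB_carrier [simp]: "sysB m P \<in> carrier_mat m m"
  and sysD_carrier [simp]: "sysD m \<tau> \<in> carrier_mat m m"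
  and dispersion_mat_carrier [simp]: "dispersion_mat m \<sigma>0 P \<tau> k \<omega> \<in> carrier_mat m m"
  and dim_row_sysA [simp]: "dim_row (sysA m \<sigma>0 P) = m"
  and dim_col_sysA [simp]: "dim_col (sysA m \<sigma>0 P) = m"
  and dim_row_sysB [simp]: "dim_row (sysB m P) = m"
  and dim_col_sysB [simp]: "dim_col (sysB m P) = m"
  by (auto simp: sysA_def sysB_def sysD_def dispersion_mat_def)

lemma dispersion_mat_unit_tau:
  "dispersion_mat m \<sigma>0 P 1 k \<omega> = - char_matrix (map_mat complex_of_real (sysB m P)
     - (\<i> * of_real k) \<cdot>\<^sub>m map_mat complex_of_real (sysA m \<sigma>0 P)) (- \<i> * \<omega>)"
  by (rule eq_matI) (simp_all add: dispersion_mat_def sysD_def sysA_def sysB_def char_matrix_def)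

lemma stable_system_eigenvalue_Re_nonpos:
  assumes "stable_system m \<sigma>0 P"
    and "eigenvalue (map_mat complex_of_real (sysB m P)
      - (\<i> * of_real k) \<cdot>\<^sub>m map_mat complex_of_real (sysA m \<sigma>0 P)) z"
  shows "Re z \<le> 0"
proof -
  let ?M = "map_mat complex_of_real (sysB m P) - (\<i> * of_real k) \<cdot>\<^sub>m map_mat complex_of_real (sysA m \<sigma>0 P)"
  have M: "?M \<in> carrier_mat m m" by (simp add: minus_carrier_mat)
  have "det (char_matrix ?M z) = 0" using eigenvalue_det[OF M] assms(2) by simp
  then have det: "det (dispersion_mat m \<sigma>0 P 1 k (\<i> * z)) = 0"
    using det_0_negate[OF char_matrix_closed[OF M]] by (simp add: dispersion_mat_unit_tau)
  have "Im (\<i> * z) \<le> 0"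
    by (rule assms(1)[unfolded stable_system_def, rule_format, of 1 k]) (simp_all add: det)
  then show ?thesis by simp
qed

lemma eigenvalue_sysB:
  assumes P: "P \<in> carrier_mat n n" and "eigenvalue (map_mat complex_of_real P) z"
  shows "eigenvalue (map_mat complex_of_real (sysB (Suc n) P)) z"
proof -
  obtain v where v: "v \<in> carrier_vec n" "v \<noteq> 0\<^sub>v n" and Pv: "map_mat complex_of_real P *\<^sub>v v = z \<cdot>\<^sub>v v"
    using assms(2) P by (auto simp: eigenvalue_def eigenvector_def)
  define u where "u = vec (Suc n) (\<lambda>i. if i = 0 then 0 else v $ (i - 1))"
  have "(map_mat complex_of_real (sysB (Suc n) P) *\<^sub>v u) $ i = z * u $ i" if "i < Suc n" for i
  proof (cases i)
    case 0
    then show ?thesis by (simp add: u_def sysB_def scalar_prod_def)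
  next
    case (Suc r)
    then have r: "r < n" using that by simp
    have "(map_mat complex_of_real (sysB (Suc n) P) *\<^sub>v u) $ i
        = (\<Sum>c = 0..<n. complex_of_real (P $$ (r, c)) * v $ c)"
      using Suc r by (simp add: sysB_def u_def scalar_prod_def sum.atLeast0_lessThan_Suc_shift
          del: sum.op_ivl_Suc)
    also have "\<dots> = (map_mat complex_of_real P *\<^sub>v v) $ r"
      using P v r by (simp add: scalar_prod_def)
    finally show ?thesis using Pv r v Suc by (simp add: u_def)
  qed
  then have "map_mat complex_of_real (sysB (Suc n) P) *\<^sub>v u = z \<cdot>\<^sub>v u"
    by (intro eq_vecI) (simp_all add: u_def)
  moreover have "u \<noteq> 0\<^sub>v (Suc n)"
  proof
    assume "u = 0\<^sub>v (Suc n)"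
    have "v $ r = 0" if "r < n" for r
    proof -
      have "u $ Suc r = 0" using \<open>u = 0\<^sub>v (Suc n)\<close> that by simp
      then show ?thesis using that by (simp add: u_def)
    qed
    then have "v = 0\<^sub>v n" using v(1) by (intro eq_vecI) auto
    with v(2) show False ..
  qed
  ultimately have "eigenvector (map_mat complex_of_real (sysB (Suc n) P)) u z"
    by (simp add: eigenvector_def u_def)
  then show ?thesis by (auto simp: eigenvalue_def)
qed

lemma stable_system_eigenvalue_P:
  assumes "stable_system (Suc n) \<sigma>0 P" and "P \<in> carrier_mat n n"
    and "eigenvalue (map_mat complex_of_real P) z"
  shows "Re z \<le> 0"
proof -
  have "map_mat complex_of_real (sysB (Suc n) P)
      - (\<i> * of_real 0) \<cdot>\<^sub>m map_mat complex_of_real (sysA (Suc n) \<sigma>0 P)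
    = map_mat complex_of_real (sysB (Suc n) P)"
    by (rule eq_matI) simp_all
  with stable_system_eigenvalue_Re_nonpos[OF assms(1), of 0 z] eigenvalue_sysB[OF assms(2,3)]
  show ?thesis by simp
qed

lemma stable_system_eigenvalue_A:
  assumes "stable_system m \<sigma>0 P" and "eigenvalue (map_mat complex_of_real (sysA m \<sigma>0 P)) \<mu>"
  shows "Im \<mu> = 0"
proof (rule eigenvalue_real_if_pencil_stable)
  show "map_mat complex_of_real (sysA m \<sigma>0 P) \<in> carrier_mat m m"
    "map_mat complex_of_real (sysB m P) \<in> carrier_mat m m" by simp_all
qed (fact stable_system_eigenvalue_Re_nonpos[OF assms(1)] assms(2))+

lemma stable_system_if_dissipative:
  assumes A_sym: "\<And>i j. i < m \<Longrightarrow> j < m \<Longrightarrow> sysA m \<sigma>0 P $$ (i, j) = sysA m \<sigma>0 P $$ (j, i)"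
    and P_skew: "\<And>r c. r < m - 1 \<Longrightarrow> c < m - 1 \<Longrightarrow> r \<noteq> c \<Longrightarrow> P $$ (r, c) + P $$ (c, r) = 0"
    and P_diag: "\<And>r. r < m - 1 \<Longrightarrow> P $$ (r, r) \<le> 0"
  shows "stable_system m \<sigma>0 P"
  unfolding stable_system_def
proof (intro allI impI)
  fix \<tau> k :: real and \<omega> :: complex
  assume "\<tau> > 0" and "det (dispersion_mat m \<sigma>0 P \<tau> k \<omega>) = 0"
  then obtain v where v: "v \<in> carrier_vec m" "v \<noteq> 0\<^sub>v m"
    and null: "dispersion_mat m \<sigma>0 P \<tau> k \<omega> *\<^sub>v v = 0\<^sub>v m"
    using det_0_iff_vec_prod_zero[OF dispersion_mat_carrier] by blast
  show "Im \<omega> \<le> 0"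
  proof (rule dissipative_pencil_Im_nonpos[OF sysD_carrier sysA_carrier sysB_carrier v
        null[unfolded dispersion_mat_def]])
    show "sysB m P $$ (i, j) + sysB m P $$ (j, i) = 0" if "i < m" "j < m" "i \<noteq> j" for i j
      using that P_skew[of "i - 1" "j - 1"] by (auto simp: sysB_def)
    show "sysB m P $$ (i, i) \<le> 0" if "i < m" for i
      using that P_diag[of "i - 1"] by (simp add: sysB_def)
  qed (use \<open>\<tau> > 0\<close> A_sym in \<open>simp_all add: sysD_def\<close>)
qed

lemma sysA_monomial_mat:
  assumes "\<And>r. r < n \<Longrightarrow> p r < n"
  shows "sysA (Suc n) \<sigma>0 (monomial_mat n p w) = monomial_mat (Suc n)
    (\<lambda>i. if i = 0 then n else p (i - 1)) (\<lambda>i. if i = 0 then \<sigma>0 else w (i - 1))"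
proof (rule eq_matI)
  fix i j assume "i < dim_row (monomial_mat (Suc n) (\<lambda>i. if i = 0 then n else p (i - 1))
      (\<lambda>i. if i = 0 then \<sigma>0 else w (i - 1)))"
    and "j < dim_col (monomial_mat (Suc n) (\<lambda>i. if i = 0 then n else p (i - 1))
      (\<lambda>i. if i = 0 then \<sigma>0 else w (i - 1)))"
  then have ij: "i < Suc n" "j < Suc n" by simp_all
  have "p (i - 1) < n" if "0 < i" using assms ij that by simp
  show "sysA (Suc n) \<sigma>0 (monomial_mat n p w) $$ (i, j) = monomial_mat (Suc n)
      (\<lambda>i. if i = 0 then n else p (i - 1)) (\<lambda>i. if i = 0 then \<sigma>0 else w (i - 1)) $$ (i, j)"
    using ij \<open>0 < i \<Longrightarrow> p (i - 1) < n\<close> by (auto simp: sysA_def)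
qed (simp_all add: sysA_def)

definition cyclic_pred :: "nat \<Rightarrow> nat \<Rightarrow> nat" where
  "cyclic_pred n i = (if i = 0 then n else if i \<le> n then i - 1 else i)"

lemma cyclic_pred_permutes: "cyclic_pred n permutes {..<Suc n}"
proof (rule bij_imp_permutes)
  show "bij_betw (cyclic_pred n) {..<Suc n} {..<Suc n}"
    by (rule bij_betw_byWitness[where f' = "\<lambda>i. if i = n then 0 else Suc i"])
      (auto simp: cyclic_pred_def)
qed (simp add: cyclic_pred_def)

section \<open>Stability of P*\<close>

text \<open>The nonzero entry of \<open>P*\<close> in column \<open>j\<close> (1-based), i.e. \<open>p*\<^sub>m\<^sub>-\<^sub>j\<^sub>,\<^sub>j\<close>.\<close>
definition pstar_antidiag :: "nat \<Rightarrow> real \<Rightarrow> nat \<Rightarrow> real" where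
  "pstar_antidiag m \<sigma>0 j = (if 2 * j \<le> m then \<sigma>0 * (-1) ^ (j - 1) else \<sigma>0 * (-1) ^ (m - j))"

lemma Pstar_monomial:
  "Pstar (Suc n) \<sigma>0 = monomial_mat n (\<lambda>r. n - 1 - r) (\<lambda>r. pstar_antidiag (Suc n) \<sigma>0 (n - r))"
proof (rule eq_matI)
  fix r c
  assume "r < dim_row (monomial_mat n (\<lambda>r. n - 1 - r) (\<lambda>r. pstar_antidiag (Suc n) \<sigma>0 (n - r)))"
    and "c < dim_col (monomial_mat n (\<lambda>r. n - 1 - r) (\<lambda>r. pstar_antidiag (Suc n) \<sigma>0 (n - r)))"
  then have rc: "r < n" "c < n" by simp_all
  then have "(r + 1 + (c + 1) = Suc n) = (c = n - 1 - r)" "c + 1 = n - r \<or> c \<noteq> n - 1 - r" by auto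
  then show "Pstar (Suc n) \<sigma>0 $$ (r, c) =
      monomial_mat n (\<lambda>r. n - 1 - r) (\<lambda>r. pstar_antidiag (Suc n) \<sigma>0 (n - r)) $$ (r, c)"
    using rc by (auto simp: Pstar_def pstar_entry_def pstar_antidiag_def)
qed (simp_all add: Pstar_def)

lemma pstar_antidiag_1: "2 \<le> m \<Longrightarrow> pstar_antidiag m \<sigma>0 1 = \<sigma>0"
  by (simp add: pstar_antidiag_def)

lemma pstar_antidiag_Suc:
  assumes "1 \<le> j" and "j < m"
  shows "pstar_antidiag m \<sigma>0 (Suc j) =
    (if 2 * j = m then pstar_antidiag m \<sigma>0 j else - pstar_antidiag m \<sigma>0 j)"
proof -
  have "2 * Suc j \<le> m \<or> 2 * j = m \<or> 2 * j + 1 = m \<or> 2 * j > m" by presburger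
  then consider "2 * Suc j \<le> m" | "2 * j = m" | "2 * j + 1 = m" | "2 * j > m" by blast
  then show ?thesis
  proof cases
    case 1
    then show ?thesis using assms by (cases j) (simp_all add: pstar_antidiag_def)
  next
    case 2
    then have "m - Suc j = j - 1" by linarith
    then show ?thesis using 2 by (simp add: pstar_antidiag_def)
  next
    case 3
    then have "m - Suc j = j" by linarith
    then show ?thesis using 3 assms by (cases j) (simp_all add: pstar_antidiag_def)
  next
    case 4
    then have "m - j = Suc (m - Suc j)" using assms by linarith
    then show ?thesis using 4 by (simp add: pstar_antidiag_def)
  qed
qed

lemma pstar_antidiag_sym:
  assumes "a + b = m + 1" and "2 \<le> a" and "2 \<le> b"
  shows "pstar_antidiag m \<sigma>0 a = pstar_antidiag m \<sigma>0 b"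
proof -
  have *: "pstar_antidiag m \<sigma>0 a = pstar_antidiag m \<sigma>0 b"
    if ab: "a + b = m + 1" "2 \<le> b" "2 * a \<le> m" for a b
  proof -
    have "\<not> 2 * b \<le> m" "m - b = a - 1" using ab by linarith+
    then show ?thesis using ab by (simp add: pstar_antidiag_def)
  qed
  consider (a) "2 * a \<le> m" | (b) "2 * b \<le> m" | (eq) "a = b" using assms by linarith
  then show ?thesis
  proof cases
    case a
    then show ?thesis using *[of a b] assms by simp
  next
    case b
    then show ?thesis using *[of b a] assms by (simp add: add.commute)
  qed simp
qed

lemma pstar_antidiag_skew:
  assumes "a + b = m" and "a \<noteq> b" and "1 \<le> a" and "1 \<le> b"
  shows "pstar_antidiag m \<sigma>0 a + pstar_antidiag m \<sigma>0 b = 0"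
proof -
  have *: "pstar_antidiag m \<sigma>0 a + pstar_antidiag m \<sigma>0 b = 0"
    if ab: "a + b = m" "1 \<le> a" "2 * a < m" for a b
  proof -
    obtain a' where "a = Suc a'" using ab(2) by (cases a) auto
    moreover have "\<not> 2 * b \<le> m" "m - b = a" using ab by linarith+
    ultimately show ?thesis using ab by (simp add: pstar_antidiag_def)
  qed
  consider (a) "2 * a < m" | (b) "2 * b < m" using assms by linarith
  then show ?thesis
  proof cases
    case a
    then show ?thesis using *[of a b] assms by simp
  next
    case b
    then show ?thesis using *[of b a] assms by (simp add: add.commute)
  qed
qed

lemma pstar_antidiag_middle:
  assumes "2 * j = m" and "\<sigma>0 = (-1) ^ (m div 2)" and "1 \<le> j"
  shows "pstar_antidiag m \<sigma>0 j = -1"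
proof -
  obtain i where j: "j = Suc i" using assms(3) by (cases j) auto
  have "m div 2 = j" using assms(1) by simp
  then have "pstar_antidiag m \<sigma>0 j = - ((-1) ^ i * (-1) ^ i)"
    using assms(1,2) j by (simp add: pstar_antidiag_def)
  also have "\<dots> = -1" by (simp flip: power_add)
  finally show ?thesis .
qed

lemma sysA_Pstar_symmetric:
  assumes m: "m = Suc n" "1 \<le> n" and "i < m" and "j < m"
  shows "sysA m \<sigma>0 (Pstar m \<sigma>0) $$ (i, j) = sysA m \<sigma>0 (Pstar m \<sigma>0) $$ (j, i)"
proof -
  define w where "w = (\<lambda>r. pstar_antidiag m \<sigma>0 (n - r))"
  define g where "g i = (if i = 0 then n else n - i)" for i
  define wg where "wg i = (if i = 0 then \<sigma>0 else w (i - 1))" for i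
  have "sysA m \<sigma>0 (Pstar m \<sigma>0) = sysA (Suc n) \<sigma>0 (monomial_mat n (\<lambda>r. n - 1 - r) w)"
    using Pstar_monomial[of n \<sigma>0] m by (simp add: w_def)
  also have "\<dots> = monomial_mat (Suc n) (\<lambda>i. if i = 0 then n else n - 1 - (i - 1))
      (\<lambda>i. if i = 0 then \<sigma>0 else w (i - 1))"
    by (rule sysA_monomial_mat) simp
  also have "\<dots> = monomial_mat m g wg"
    unfolding m(1) by (intro monomial_mat_cong) (auto simp: g_def wg_def)
  finally have A: "sysA m \<sigma>0 (Pstar m \<sigma>0) = monomial_mat m g wg" .
  have "wg (g i) = wg i" if "i < m" for i
  proof -
    have "wg n = \<sigma>0" using m pstar_antidiag_1[of m \<sigma>0] by (simp add: wg_def w_def)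
    moreover have "wg (n - i) = wg i" if "0 < i" "i < n"
      using that m pstar_antidiag_sym[of "i + 1" "n - i + 1" m \<sigma>0]
      by (simp add: wg_def w_def Suc_diff_Suc Suc_diff_le)
    ultimately show ?thesis
      using that m by (cases "i = 0 \<or> i = n") (auto simp: g_def wg_def)
  qed
  then show ?thesis
    unfolding A using assms by (intro monomial_mat_symmetric) (auto simp: g_def)
qed

lemma stable_system_Pstar:
  assumes m: "m = Suc n" "1 \<le> n" and middle: "even m \<Longrightarrow> \<sigma>0 = (-1) ^ (m div 2)"
  shows "stable_system m \<sigma>0 (Pstar m \<sigma>0)"
proof (rule stable_system_if_dissipative)
  define w where "w = (\<lambda>r. pstar_antidiag m \<sigma>0 (n - r))"
  have P: "Pstar m \<sigma>0 = monomial_mat n (\<lambda>r. n - 1 - r) w"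
    using Pstar_monomial[of n \<sigma>0] m by (simp add: w_def)
  show "sysA m \<sigma>0 (Pstar m \<sigma>0) $$ (i, j) = sysA m \<sigma>0 (Pstar m \<sigma>0) $$ (j, i)"
    if "i < m" "j < m" for i j
    using m that by (rule sysA_Pstar_symmetric)
  show "Pstar m \<sigma>0 $$ (r, c) + Pstar m \<sigma>0 $$ (c, r) = 0"
    if "r < m - 1" "c < m - 1" "r \<noteq> c" for r c
    unfolding P using that m pstar_antidiag_skew[of "n - r" "r + 1" m \<sigma>0]
    by (auto simp: w_def Suc_diff_Suc)
  show "Pstar m \<sigma>0 $$ (r, r) \<le> 0" if "r < m - 1" for r
  proof (cases "r = n - 1 - r")
    case True
    then have "2 * (n - r) = m" using that m by linarith
    moreover have "even m" using \<open>2 * (n - r) = m\<close> by (metis dvd_triv_left)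
    ultimately have "pstar_antidiag m \<sigma>0 (n - r) = -1"
      using middle that m by (intro pstar_antidiag_middle) auto
    then show ?thesis unfolding P using True that m by (simp add: w_def)
  qed (unfold P, use that m in simp)
qed

section \<open>Stability forces P = P*\<close>

lemma reversal_if_involutions:
  fixes p g :: "nat \<Rightarrow> nat"
  assumes p_inv: "\<And>r. r < n \<Longrightarrow> p (p r) = r"
    and g_0: "g 0 = n" and g_Suc: "\<And>r. r < n \<Longrightarrow> g (Suc r) = p r"
    and g_inv: "\<And>i. i \<le> n \<Longrightarrow> g (g i) = i"
    and "r < n"
  shows "p r = n - 1 - r"
  using \<open>r < n\<close>
proof (induction r)
  case 0
  have "g n = p (n - 1)" using g_Suc[of "n - 1"] 0 by simp
  then have "p (n - 1) = 0" using g_inv[of 0] g_0 by simp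
  then show ?case using p_inv[of "n - 1"] 0 by simp
next
  case (Suc r)
  then have "g (Suc r) = n - 1 - r" using g_Suc by simp
  then have "g (n - 1 - r) = Suc r" using g_inv[of "Suc r"] Suc.prems by simp
  moreover have "n - 1 - r = Suc (n - 2 - r)" using Suc.prems by simp
  ultimately have "p (n - 2 - r) = Suc r" using g_Suc[of "n - 2 - r"] Suc.prems by simp
  then show ?case using p_inv[of "n - 2 - r"] Suc.prems by simp
qed

text \<open>For \<open>P\<close> anti-diagonal, \<open>first\<close> and \<open>A_sign\<close> are the sign conditions of the transpositions
  \<open>(0, n)\<close> and \<open>(r + 1, n - 1 - r)\<close> of \<open>A\<close>, and \<open>P_sign\<close> that of the transposition \<open>(r, n - 1 - r)\<close> of \<open>P\<close>.\<close>
lemma weights_eq_pstar_antidiag: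
  fixes w :: "nat \<Rightarrow> real"
  assumes w: "\<And>r. r < n \<Longrightarrow> w r = 1 \<or> w r = -1"
    and first: "\<sigma>0 * w (n - 1) = 1"
    and P_sign: "\<And>r. r < n \<Longrightarrow> 2 * r + 1 \<noteq> n \<Longrightarrow> w r * w (n - 1 - r) = -1"
    and A_sign: "\<And>r. r + 1 < n \<Longrightarrow> 2 * r + 2 \<noteq> n \<Longrightarrow> w r * w (n - 2 - r) = 1"
    and "r < n"
  shows "w r = pstar_antidiag (Suc n) \<sigma>0 (n - r)"
proof -
  have step: "w (n - j) = pstar_antidiag (Suc n) \<sigma>0 j" if "1 \<le> j" "j \<le> n" for j
    using that
  proof (induction j rule: nat_induct_at_least)
    case base
    have "w (n - 1) = \<sigma>0" using first w[of "n - 1"] base by auto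
    then show ?case using base pstar_antidiag_1[of "Suc n" \<sigma>0] by simp
  next
    case (Suc j)
    have "w (n - Suc j) = w (j - 1)"
    proof (cases "2 * j = n")
      case True
      then have "n - Suc j = j - 1" by linarith
      then show ?thesis by simp
    next
      case False
      then have "w (n - Suc j) * w (j - 1) = 1"
        using A_sign[of "n - Suc j"] Suc by (simp add: Suc_diff_Suc)
      then show ?thesis using w[of "n - Suc j"] w[of "j - 1"] Suc by auto
    qed
    also have "\<dots> = (if 2 * j = Suc n then w (n - j) else - w (n - j))"
    proof (cases "2 * j = Suc n")
      case True
      then have "j - 1 = n - j" by linarith
      then show ?thesis using True by simp
    next
      case False
      then have "w (j - 1) * w (n - j) = -1"
        using P_sign[of "j - 1"] Suc by (simp add: Suc_diff_Suc)
      then show ?thesis using False w[of "j - 1"] w[of "n - j"] Suc by auto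
    qed
    also have "\<dots> = pstar_antidiag (Suc n) \<sigma>0 (Suc j)"
      using Suc pstar_antidiag_Suc[of j "Suc n" \<sigma>0] by simp
    finally show ?case .
  qed
  then show ?thesis using \<open>r < n\<close> step[of "n - r"] by simp
qed

text \<open>\<open>g\<close> and \<open>wg\<close> are the permutation and the weights of \<open>A\<close> (cf. \<open>sysA_monomial_mat\<close>).\<close>
lemma stable_system_monomial:
  assumes st: "stable_system (Suc n) \<sigma>0 (monomial_mat n p w)"
    and \<sigma>0: "\<sigma>0 = 1 \<or> \<sigma>0 = -1" and p: "p permutes {..<n}"
    and w: "\<forall>r<n. w r = 1 \<or> w r = -1"
  defines "g \<equiv> p \<circ> cyclic_pred n" and "wg \<equiv> \<lambda>i. if i = 0 then \<sigma>0 else w (i - 1)"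
  shows "r < n \<Longrightarrow> p (p r) = r"
    and "r < n \<Longrightarrow> p r \<noteq> r \<Longrightarrow> w r * w (p r) = -1"
    and "i \<le> n \<Longrightarrow> g (g i) = i"
    and "i \<le> n \<Longrightarrow> g i \<noteq> i \<Longrightarrow> wg i * wg (g i) = 1"
proof -
  have g: "g permutes {..<Suc n}"
    unfolding g_def using cyclic_pred_permutes permutes_subset[OF p]
    by (intro permutes_compose) auto
  have wg: "\<forall>i<Suc n. wg i = 1 \<or> wg i = -1"
    using w \<sigma>0 by (auto simp: wg_def less_Suc_eq_0_disj)
  have "p r < n" if "r < n" for r
    using p that by (metis lessThan_iff permutes_in_image)
  then have "sysA (Suc n) \<sigma>0 (monomial_mat n p w) = monomial_mat (Suc n) g wg"
    using p by (subst sysA_monomial_mat)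
      (auto simp: g_def wg_def cyclic_pred_def permutes_not_in intro!: monomial_mat_cong)
  then have A: "\<not> eigenvalue (map_mat complex_of_real (monomial_mat (Suc n) g wg)) z"
    if "z \<in> {z. Im z \<noteq> 0}" for z
    using stable_system_eigenvalue_A[OF st, of z] that by auto
  have P: "\<not> eigenvalue (map_mat complex_of_real (monomial_mat n p w)) z"
    if "z \<in> {z. Re z > 0}" for z
    using stable_system_eigenvalue_P[OF st, of z] that by auto
  show p_inv: "p (p r) = r" if "r < n" for r
  proof (rule monomial_mat_involution[OF p w P _ that])
    fix L :: nat and c :: complex assume "3 \<le> L" "c = 1 \<or> c = -1"
    from exists_root_sign_Re_pos[OF this] show "\<exists>z\<in>{z. Re z > 0}. z ^ L = c" by auto
  qed
  show g_inv: "g (g i) = i" if "i \<le> n" for i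
  proof (rule monomial_mat_involution[OF g wg A])
    fix L :: nat and c :: complex assume "3 \<le> L" "c = 1 \<or> c = -1"
    from exists_root_sign_Im_nonzero[OF this] show "\<exists>z\<in>{z. Im z \<noteq> 0}. z ^ L = c" by auto
  next
    show "i < Suc n" using that by simp
  qed
  show "w r * w (p r) = -1" if "r < n" "p r \<noteq> r" for r
    using monomial_mat_transposition_weight[OF p w P[of 1] _ _ that p_inv[OF that(1)]] by simp
  show "wg i * wg (g i) = 1" if "i \<le> n" "g i \<noteq> i" for i
    using monomial_mat_transposition_weight[OF g wg A[of \<i>], where c = "-1"] g_inv[OF that(1)] that
    by simp
qed

lemma Pstar_if_stable:
  assumes m: "m = Suc n" "1 \<le> n" and \<sigma>0: "\<sigma>0 = 1 \<or> \<sigma>0 = -1"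
    and sp: "signed_perm_mat n P" and st: "stable_system m \<sigma>0 P"
  shows "P = Pstar m \<sigma>0"
proof -
  obtain p w where p: "p permutes {..<n}" and w: "\<forall>r<n. w r = 1 \<or> w r = -1"
    and P: "P = monomial_mat n p w"
    by (rule signed_perm_mat_monomial[OF sp])
  note stable = stable_system_monomial[OF st[unfolded m(1) P] \<sigma>0 p w]
  have cyclic_pred: "cyclic_pred n 0 = n" "\<And>r. r < n \<Longrightarrow> cyclic_pred n (Suc r) = r"
    by (simp_all add: cyclic_pred_def)
  have "p n = n" using p by (simp add: permutes_not_in)
  have reversal: "p r = n - 1 - r" if "r < n" for r
    using stable(1,3) that cyclic_pred \<open>p n = n\<close>
    by (intro reversal_if_involutions[where g = "p \<circ> cyclic_pred n"]) auto
  have weights: "w r = pstar_antidiag (Suc n) \<sigma>0 (n - r)" if "r < n" for r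
  proof (rule weights_eq_pstar_antidiag[OF _ _ _ _ that])
    show "w r = 1 \<or> w r = -1" if "r < n" for r using w that by simp
    show "\<sigma>0 * w (n - 1) = 1"
      using stable(4)[of 0] cyclic_pred reversal[of "n - 1"] \<open>p n = n\<close> m by simp
    show "w r * w (n - 1 - r) = -1" if "r < n" "2 * r + 1 \<noteq> n" for r
      using stable(2)[of r] reversal[of r] that by auto
    show "w r * w (n - 2 - r) = 1" if "r + 1 < n" "2 * r + 2 \<noteq> n" for r
      using stable(4)[of "Suc r"] cyclic_pred reversal[of r] that by (simp add: Suc_diff_Suc)
  qed
  have "Pstar m \<sigma>0 = monomial_mat n (\<lambda>r. n - 1 - r) (\<lambda>r. pstar_antidiag (Suc n) \<sigma>0 (n - r))"
    using Pstar_monomial[of n \<sigma>0] m by simp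
  also have "\<dots> = P"
    unfolding P using reversal weights by (intro monomial_mat_cong) simp_all
  finally show ?thesis ..
qed

theorem theorem1:
  fixes m :: nat and \<sigma>0 :: real and P :: "real mat"
  assumes "m \<ge> 2"
    and "odd m \<Longrightarrow> \<sigma>0 = 1 \<or> \<sigma>0 = -1"
    and "even m \<Longrightarrow> \<sigma>0 = (-1) ^ (m div 2)"
    and "signed_perm_mat (m - 1) P"
  shows "stable_system m \<sigma>0 P \<longleftrightarrow> P = Pstar m \<sigma>0"
proof -
  define n where "n = m - 1"
  have m: "m = Suc n" "1 \<le> n" using assms(1) by (simp_all add: n_def)
  have \<sigma>0: "\<sigma>0 = 1 \<or> \<sigma>0 = -1"
    using assms(2,3) by (cases "even m") (simp_all add: minus_one_power_iff)
  have "signed_perm_mat n P" using assms(4) by (simp add: n_def)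
  then show ?thesis
    using Pstar_if_stable[OF m \<sigma>0] stable_system_Pstar[OF m assms(3)] by blast
qed

end
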